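(* Let $(\mathcal{F}_t)$ be a filtration. Let $\varepsilon_t = \sigma_t z_t$ with $\sigma_t = \exp(H_t)$, $H_t = \bar{H}_t + h_t$, where $\bar{H}_t = E\{H_t\mid\mathcal{F}_{t-1}\}$ is $\mathcal{F}_{t-1}$-measurable, $(h_t)$ is i.i.d. with Laplace density $\frac{1}{2\Delta}\exp(-|x|/\Delta)$, $\Delta = E|h_t|>0$, and $(z_t)$ is i.i.d. $\mathcal{N}(0,1)$, with $z_t$, $h_t$ mutually independent and independent of $\mathcal{F}_{t-1}$. For $\Lambda > 0$ put $\widetilde{\Lambda}_t = \Lambda/(\sqrt{2}e^{\bar{H}_t})$. Then $$P\{|\varepsilon_t| \ge \Lambda \mid \mathcal{F}_{t-1}\} = \frac{1}{2\sqrt{\pi}}\left(\gamma\!\left(\frac{1+1/\Delta}{2}, \widetilde{\Lambda}_t^2\right)\widetilde{\Lambda}_t^{-1/\Delta} - \Gamma\!\left(\frac{1-1/\Delta}{2}, \widetilde{\Lambda}_t^2\right)\widetilde{\Lambda}_t^{1/\Delta}\right) + \operatorname{erfc}(\widetilde{\Lambda}_t).$$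
   Context: $\Gamma(a,b) = \int_b^\infty x^{a-1}e^{-x}\,dx$ (upper incomplete gamma function), $\gamma(a,b) = \int_0^b x^{a-1}e^{-x}\,dx$ (lower incomplete gamma function), and $\operatorname{erfc}(x) = \frac{2}{\sqrt{\pi}}\int_x^\infty e^{-u^2}\,du$ is the complementary error function. *)

theory Defs
  imports "HOL-Probability.Probability"
begin

definition upper_inc_gamma :: "real \<Rightarrow> real \<Rightarrow> real" where
  "upper_inc_gamma a b = (LBINT x:{b..}. x powr (a - 1) * exp (- x))"

definition lower_inc_gamma :: "real \<Rightarrow> real \<Rightarrow> real" where
  "lower_inc_gamma a b = (LBINT x:{0..b}. x powr (a - 1) * exp (- x))"

definition erfc :: "real \<Rightarrow> real" where
  "erfc x = 2 / sqrt pi * (LBINT u:{x..}. exp (- (u\<^sup>2)))"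

definition laplace_density :: "real \<Rightarrow> real \<Rightarrow> real" where
  "laplace_density \<Delta> x = 1 / (2 * \<Delta>) * exp (- \<bar>x\<bar> / \<Delta>)"

end

theory Submission
  imports Defs "HOL-Real_Asymp.Real_Asymp"
begin

text \<open>
  Conditionally on F, the F-measurable variable Hbar acts as a constant c, while (z, h) is
  independent of F and keeps its law N(0,1) x Laplace(Delta). For fixed z = a the Laplace tail
  gives P{|a| exp (c + h) >= Lambda} = (|a|/K)^(1/Delta)/2 if |a| <= K and
  1 - (K/|a|)^(1/Delta)/2 otherwise, where K = Lambda exp (-c). Averaging over a = sqrt 2 u
  against the weight exp (-u^2)/sqrt pi and splitting at u = L = K/sqrt 2 leaves the integrals
  of u^(1/Delta) exp (-u^2) over (0, L), of u^(-1/Delta) exp (-u^2) over (L, infinity) and of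
  exp (-u^2) over (L, infinity); the substitution x = u^2 turns them into the two incomplete
  gamma functions and erfc L.
\<close>

lemma integrable_exp_neg_square: "integrable lborel (\<lambda>x::real. exp (- x\<^sup>2))"
proof -
  have "(\<lambda>x::real. exp (- x\<^sup>2)) = (\<lambda>x. sqrt (2 * pi) * std_normal_density (0 + sqrt 2 * x))"
    by (simp add: normal_density_def power_mult_distrib)
  then show ?thesis
    by (simp only:) (intro integrable_mult_right lborel_integrable_real_affine, auto)
qed

lemma interval_lebesgue_integrable_if_integrable:
  fixes f :: "real \<Rightarrow> real"
  assumes "integrable lborel f"
  shows "interval_lebesgue_integrable lborel a b f"
  using assms integrable_mult_indicator[of _ lborel f]
  by (auto simp: interval_lebesgue_integrable_def set_integrable_def)

lemma interval_integral_Ici: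
  fixes a :: real
  shows "(LBINT x=ereal a..\<infinity>. f x) = (LBINT x:{a..}. f x)"
  unfolding interval_integral_to_infinity_eq
  by (rule set_integral_discrete_difference[where X="{a}"]) auto

lemma set_integrable_powr_exp_neg_square_Ioo:
  fixes \<beta> L :: real
  assumes "0 \<le> \<beta>" and "L > 0"
  shows "set_integrable lborel (einterval 0 L) (\<lambda>u. u powr \<beta> * exp (- u\<^sup>2))"
proof (rule set_integrable_bound[where f="\<lambda>_. L powr \<beta>"])
  show "set_integrable lborel (einterval 0 L) (\<lambda>_. L powr \<beta>)"
    using assms unfolding set_integrable_def zero_ereal_def einterval_eq_Icc by simp
  show "set_borel_measurable lborel (einterval 0 L) (\<lambda>u. u powr \<beta> * exp (- u\<^sup>2))"
    unfolding set_borel_measurable_def by measurable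
  have "u powr \<beta> * exp (- u\<^sup>2) \<le> L powr \<beta> * 1" if "0 < u" "u < L" for u
    using that assms by (intro mult_mono powr_mono2) auto
  then show "AE u in lborel. u \<in> einterval 0 L \<longrightarrow>
      norm (u powr \<beta> * exp (- u\<^sup>2)) \<le> norm (L powr \<beta>)"
    by (auto simp: einterval_iff)
qed

lemma set_integrable_powr_exp_neg_square_Ioi:
  fixes \<beta> L :: real
  assumes "\<beta> \<le> 0" and "L > 0"
  shows "set_integrable lborel (einterval L \<infinity>) (\<lambda>u. u powr \<beta> * exp (- u\<^sup>2))"
proof (rule set_integrable_bound[where f="\<lambda>u. L powr \<beta> * exp (- u\<^sup>2)"])
  show "set_integrable lborel (einterval L \<infinity>) (\<lambda>u. L powr \<beta> * exp (- u\<^sup>2))"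
    unfolding set_integrable_def
    by (intro integrable_mult_indicator integrable_mult_right integrable_exp_neg_square) auto
  show "set_borel_measurable lborel (einterval L \<infinity>) (\<lambda>u. u powr \<beta> * exp (- u\<^sup>2))"
    unfolding set_borel_measurable_def by measurable
  have "u powr \<beta> \<le> L powr \<beta>" if "L < u" for u
    using that assms by (intro powr_mono2') auto
  then show "AE u in lborel. u \<in> einterval L \<infinity> \<longrightarrow>
      norm (u powr \<beta> * exp (- u\<^sup>2)) \<le> norm (L powr \<beta> * exp (- u\<^sup>2))"
    by (auto simp: abs_mult)
qed

lemma incomplete_gamma_integrand_square:
  fixes u a :: real
  assumes "u > 0"
  shows "(u\<^sup>2) powr (a - 1) * exp (- (u\<^sup>2)) * (2 * u) = 2 * (u powr (2 * a - 1) * exp (- u\<^sup>2))"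
proof -
  have "(u\<^sup>2) powr (a - 1) * u = u powr (2 * (a - 1)) * u powr 1"
    using assms powr_powr[of u 2 "a - 1"] by simp
  also have "\<dots> = u powr (2 * a - 1)"
    by (simp only: powr_add[symmetric]) (simp add: algebra_simps)
  finally show ?thesis by (simp add: algebra_simps)
qed

lemma lower_inc_gamma_square_subst:
  assumes "0 \<le> \<beta>" and "L > 0"
  shows "lower_inc_gamma ((1 + \<beta>) / 2) (L\<^sup>2) = 2 * (LBINT u=0..L. u powr \<beta> * exp (- u\<^sup>2))"
proof -
  define f where "f x = x powr ((1 + \<beta>) / 2 - 1) * exp (- x)" for x :: real
  have "2 * ((1 + \<beta>) / 2) - 1 = \<beta>" by (simp add: field_simps)
  then have integrand: "f (u\<^sup>2) * (2 * u) = 2 * (u powr \<beta> * exp (- u\<^sup>2))" if "u > 0" for u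
    unfolding f_def using incomplete_gamma_integrand_square[OF that, of "(1 + \<beta>) / 2"] by (simp only:)
  have "(LBINT x=ereal 0..ereal (L\<^sup>2). f x) = (LBINT u=ereal 0..ereal L. f (u\<^sup>2) * (2 * u))"
  proof (rule interval_integral_substitution_nonneg(2))
    show "((ereal \<circ> (\<lambda>u. u\<^sup>2) \<circ> real_of_ereal) \<longlongrightarrow> ereal 0) (at_right (ereal 0))"
      and "((ereal \<circ> (\<lambda>u. u\<^sup>2) \<circ> real_of_ereal) \<longlongrightarrow> ereal (L\<^sup>2)) (at_left (ereal L))"
      by (auto simp: ereal_tendsto_simps intro!: tendsto_eq_intros)
    have "set_integrable lborel (einterval 0 L) (\<lambda>u. 2 * (u powr \<beta> * exp (- u\<^sup>2)))"
      using set_integrable_powr_exp_neg_square_Ioo[OF assms] by simp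
    then show "set_integrable lborel (einterval (ereal 0) (ereal L)) (\<lambda>u. f (u\<^sup>2) * (2 * u))"
      unfolding zero_ereal_def[symmetric]
      by (subst set_integrable_cong[OF refl refl integrand]) (auto simp: einterval_iff)
    show "((\<lambda>u. u\<^sup>2) has_real_derivative 2 * u) (at u)" for u
      by (auto intro!: derivative_eq_intros)
    show "isCont f (u\<^sup>2)" if "ereal 0 < ereal u" for u
      using that unfolding f_def by (auto intro!: continuous_intros)
    show "isCont (\<lambda>u::real. 2 * u) u" for u
      by (auto intro!: continuous_intros)
    show "0 \<le> f (u\<^sup>2)" for u
      unfolding f_def by simp
    show "0 \<le> 2 * u" if "ereal 0 \<le> ereal u" for u
      using that by simp
  qed (use assms in simp)
  also have "\<dots> = (LBINT u=ereal 0..ereal L. 2 * (u powr \<beta> * exp (- u\<^sup>2)))"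
    using assms by (intro interval_integral_cong) (auto simp: einterval_iff integrand)
  also have "\<dots> = 2 * (LBINT u=ereal 0..ereal L. u powr \<beta> * exp (- u\<^sup>2))"
    by (rule interval_lebesgue_integral_mult_right)
  also have "(LBINT x=ereal 0..ereal (L\<^sup>2). f x) = lower_inc_gamma ((1 + \<beta>) / 2) (L\<^sup>2)"
    unfolding lower_inc_gamma_def f_def by (rule interval_integral_Icc) simp
  finally show ?thesis by (simp only: zero_ereal_def)
qed

lemma upper_inc_gamma_square_subst:
  assumes "0 \<le> \<beta>" and "L > 0"
  shows "upper_inc_gamma ((1 - \<beta>) / 2) (L\<^sup>2) = 2 * (LBINT u=L..\<infinity>. u powr (- \<beta>) * exp (- u\<^sup>2))"
proof -
  define f where "f x = x powr ((1 - \<beta>) / 2 - 1) * exp (- x)" for x :: real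
  have "2 * ((1 - \<beta>) / 2) - 1 = - \<beta>" by (simp add: field_simps)
  then have integrand: "f (u\<^sup>2) * (2 * u) = 2 * (u powr (- \<beta>) * exp (- u\<^sup>2))" if "u > 0" for u
    unfolding f_def using incomplete_gamma_integrand_square[OF that, of "(1 - \<beta>) / 2"] by (simp only:)
  have "(LBINT x=ereal (L\<^sup>2)..\<infinity>. f x) = (LBINT u=ereal L..\<infinity>. f (u\<^sup>2) * (2 * u))"
  proof (rule interval_integral_substitution_nonneg(2))
    show "((ereal \<circ> (\<lambda>u. u\<^sup>2) \<circ> real_of_ereal) \<longlongrightarrow> ereal (L\<^sup>2)) (at_right (ereal L))"
      by (auto simp: ereal_tendsto_simps intro!: tendsto_eq_intros)
    show "((ereal \<circ> (\<lambda>u. u\<^sup>2) \<circ> real_of_ereal) \<longlongrightarrow> \<infinity>) (at_left \<infinity>)"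
      unfolding ereal_tendsto_simps by (simp add: filterlim_pow_at_top filterlim_ident)
    have "set_integrable lborel (einterval L \<infinity>) (\<lambda>u. 2 * (u powr (- \<beta>) * exp (- u\<^sup>2)))"
      using set_integrable_powr_exp_neg_square_Ioi[of "- \<beta>" L] assms by simp
    then show "set_integrable lborel (einterval (ereal L) \<infinity>) (\<lambda>u. f (u\<^sup>2) * (2 * u))"
      using assms by (subst set_integrable_cong[OF refl refl integrand]) auto
    show "((\<lambda>u. u\<^sup>2) has_real_derivative 2 * u) (at u)" for u
      by (auto intro!: derivative_eq_intros)
    show "isCont f (u\<^sup>2)" if "ereal L < ereal u" for u
      using that assms unfolding f_def by (auto intro!: continuous_intros)
    show "isCont (\<lambda>u::real. 2 * u) u" for u
      by (auto intro!: continuous_intros)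
    show "0 \<le> f (u\<^sup>2)" for u
      unfolding f_def by simp
    show "0 \<le> 2 * u" if "ereal L \<le> ereal u" for u
      using that assms by simp
  qed simp
  also have "\<dots> = (LBINT u=ereal L..\<infinity>. 2 * (u powr (- \<beta>) * exp (- u\<^sup>2)))"
    using assms by (intro interval_integral_cong) (auto simp: einterval_iff integrand)
  also have "\<dots> = 2 * (LBINT u=ereal L..\<infinity>. u powr (- \<beta>) * exp (- u\<^sup>2))"
    by (rule interval_lebesgue_integral_mult_right)
  also have "(LBINT x=ereal (L\<^sup>2)..\<infinity>. f x) = upper_inc_gamma ((1 - \<beta>) / 2) (L\<^sup>2)"
    unfolding upper_inc_gamma_def f_def by (rule interval_integral_Ici)
  finally show ?thesis .
qed

lemma borel_measurable_laplace_density [measurable]: "laplace_density \<Delta> \<in> borel_measurable borel"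
  unfolding laplace_density_def by measurable

lemma nn_integral_laplace_density_atLeast_nonneg:
  assumes "\<Delta> > 0" and "0 \<le> s"
  shows "(\<integral>\<^sup>+x. ennreal (laplace_density \<Delta> x) * indicator {s..} x \<partial>lborel) = ennreal (exp (- s / \<Delta>) / 2)"
proof -
  have "(\<integral>\<^sup>+x. ennreal (laplace_density \<Delta> x) * indicator {s..} x \<partial>lborel)
      = (\<integral>\<^sup>+x. ennreal (exp (- x / \<Delta>) / (2 * \<Delta>)) * indicator {s..} x \<partial>lborel)"
    using \<open>0 \<le> s\<close> by (intro nn_integral_cong) (auto simp: laplace_density_def indicator_def)
  also have "\<dots> = ennreal (0 - (- exp (- s / \<Delta>) / 2))"
  proof (rule nn_integral_FTC_atLeast)
    show "((\<lambda>x. - exp (- x / \<Delta>) / 2) has_real_derivative exp (- x / \<Delta>) / (2 * \<Delta>)) (at x)" for x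
      using \<open>\<Delta> > 0\<close> by (auto intro!: derivative_eq_intros simp: field_simps)
    show "((\<lambda>x. - exp (- x / \<Delta>) / 2) \<longlongrightarrow> 0) at_top"
      using \<open>\<Delta> > 0\<close> by real_asymp
  qed (use \<open>\<Delta> > 0\<close> in auto)
  finally show ?thesis by simp
qed

lemma nn_integral_laplace_density_atLeast:
  assumes "\<Delta> > 0"
  shows "(\<integral>\<^sup>+x. ennreal (laplace_density \<Delta> x) * indicator {s..} x \<partial>lborel)
      = ennreal (if 0 \<le> s then exp (- s / \<Delta>) / 2 else 1 - exp (s / \<Delta>) / 2)"
proof (cases "0 \<le> s")
  case True
  then show ?thesis using nn_integral_laplace_density_atLeast_nonneg[OF assms] by simp
next
  case False
  let ?f = "\<lambda>x. ennreal (laplace_density \<Delta> x)"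
  have "(\<integral>\<^sup>+x. ?f x * indicator {s..} x \<partial>lborel)
      = (\<integral>\<^sup>+x. ?f x * indicator {s..0} x + ?f x * indicator {0<..} x \<partial>lborel)"
    using False by (intro nn_integral_cong) (auto simp: indicator_def)
  also have "\<dots> = (\<integral>\<^sup>+x. ?f x * indicator {s..0} x \<partial>lborel) + (\<integral>\<^sup>+x. ?f x * indicator {0<..} x \<partial>lborel)"
    by (rule nn_integral_add) (auto simp: laplace_density_def)
  also have "(\<integral>\<^sup>+x. ?f x * indicator {0<..} x \<partial>lborel) = (\<integral>\<^sup>+x. ?f x * indicator {0..} x \<partial>lborel)"
    by (intro nn_integral_cong_AE)
       (use AE_lborel_singleton[of 0] in \<open>eventually_elim, auto simp: indicator_def\<close>)
  also have "(\<integral>\<^sup>+x. ?f x * indicator {s..0} x \<partial>lborel)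
      = (\<integral>\<^sup>+x. ennreal (exp (x / \<Delta>) / (2 * \<Delta>)) * indicator {s..0} x \<partial>lborel)"
    by (intro nn_integral_cong) (auto simp: laplace_density_def indicator_def)
  also have "\<dots> = ennreal (exp (0 / \<Delta>) / 2 - exp (s / \<Delta>) / 2)"
  proof (rule nn_integral_FTC_Icc)
    show "((\<lambda>x. exp (x / \<Delta>) / 2) has_real_derivative exp (x / \<Delta>) / (2 * \<Delta>)) (at x)" for x
      using assms by (auto intro!: derivative_eq_intros simp: field_simps)
  qed (use False assms in auto)
  also have "(\<integral>\<^sup>+x. ?f x * indicator {0..} x \<partial>lborel) = ennreal (1 / 2)"
    using nn_integral_laplace_density_atLeast_nonneg[OF assms, of 0] by simp
  also have "ennreal (exp (0 / \<Delta>) / 2 - exp (s / \<Delta>) / 2) + ennreal (1 / 2) = ennreal (1 - exp (s / \<Delta>) / 2)"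
  proof -
    have "exp (s / \<Delta>) \<le> 1" using False assms by (simp add: divide_nonpos_pos)
    then show ?thesis by (subst ennreal_plus[symmetric]) auto
  qed
  finally show ?thesis using False by simp
qed

text \<open>The probability that \<open>|u| exp h \<ge> L\<close> when \<open>h\<close> has density \<open>laplace_density \<Delta>\<close>.\<close>

definition exp_laplace_tail :: "real \<Rightarrow> real \<Rightarrow> real \<Rightarrow> real" where
  "exp_laplace_tail \<Delta> L u =
     (if \<bar>u\<bar> \<le> L then (\<bar>u\<bar> / L) powr (1 / \<Delta>) / 2 else 1 - (L / \<bar>u\<bar>) powr (1 / \<Delta>) / 2)"

lemma borel_measurable_exp_laplace_tail [measurable]: "exp_laplace_tail \<Delta> L \<in> borel_measurable borel"
  unfolding exp_laplace_tail_def by measurable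

lemma exp_laplace_tail_bounds:
  assumes "\<Delta> > 0" and "L > 0"
  shows "0 \<le> exp_laplace_tail \<Delta> L u" and "exp_laplace_tail \<Delta> L u \<le> 1"
proof -
  have "(\<bar>u\<bar> / L) powr (1 / \<Delta>) \<le> 1" if "\<bar>u\<bar> \<le> L"
    using that assms by (intro powr_le1) auto
  moreover have "(L / \<bar>u\<bar>) powr (1 / \<Delta>) \<le> 1" if "\<not> \<bar>u\<bar> \<le> L"
    using that assms by (intro powr_le1) auto
  ultimately show "0 \<le> exp_laplace_tail \<Delta> L u" and "exp_laplace_tail \<Delta> L u \<le> 1"
    unfolding exp_laplace_tail_def by auto
qed

lemma exp_laplace_tail_scale:
  assumes "c > 0"
  shows "exp_laplace_tail \<Delta> (c * L) (c * u) = exp_laplace_tail \<Delta> L u"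
  using assms by (simp add: exp_laplace_tail_def abs_mult)

lemma nn_integral_laplace_density_exp_ge:
  assumes "\<Delta> > 0" and "K > 0" and "a \<noteq> 0"
  shows "(\<integral>\<^sup>+b. ennreal (laplace_density \<Delta> b) * indicator {b. K \<le> exp b * \<bar>a\<bar>} b \<partial>lborel)
      = ennreal (exp_laplace_tail \<Delta> K a)"
proof -
  have "K \<le> exp b * \<bar>a\<bar> \<longleftrightarrow> ln (K / \<bar>a\<bar>) \<le> ln (exp b)" for b
    using assms by (subst ln_le_cancel_iff) (auto simp: field_simps)
  then have "{b. K \<le> exp b * \<bar>a\<bar>} = {ln (K / \<bar>a\<bar>)..}"
    by auto
  moreover have "0 \<le> ln (K / \<bar>a\<bar>) \<longleftrightarrow> \<bar>a\<bar> \<le> K"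
    using assms by (simp add: field_simps)
  moreover have "exp (- ln (K / \<bar>a\<bar>) / \<Delta>) = (\<bar>a\<bar> / K) powr (1 / \<Delta>)"
    using assms by (simp add: powr_def ln_div)
  moreover have "exp (ln (K / \<bar>a\<bar>) / \<Delta>) = (K / \<bar>a\<bar>) powr (1 / \<Delta>)"
    using assms by (simp add: powr_def)
  ultimately show ?thesis
    by (simp add: nn_integral_laplace_density_atLeast[OF \<open>\<Delta> > 0\<close>] exp_laplace_tail_def)
qed

lemma nn_integral_normal_laplace_exp_ge:
  assumes "\<Delta> > 0" and "L > 0"
  shows "(\<integral>\<^sup>+y. of_bool (sqrt 2 * L \<le> exp (snd y) * \<bar>fst y\<bar>)
            \<partial>(density lborel (\<lambda>x. ennreal (std_normal_density x))
               \<Otimes>\<^sub>M density lborel (\<lambda>x. ennreal (laplace_density \<Delta> x))))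
       = (\<integral>\<^sup>+u. ennreal (exp (- u\<^sup>2) / sqrt pi * exp_laplace_tail \<Delta> L u) \<partial>lborel)"
proof -
  let ?N = "density lborel (\<lambda>x. ennreal (std_normal_density x))"
  let ?Lap = "density lborel (\<lambda>x. ennreal (laplace_density \<Delta> x))"
  define K where "K = sqrt 2 * L"
  have "K > 0" using assms by (simp add: K_def)
  have tail_nonneg: "0 \<le> exp_laplace_tail \<Delta> K a" for a
    using exp_laplace_tail_bounds(1) assms \<open>K > 0\<close> by blast
  interpret Lap: sigma_finite_measure ?Lap
    by (subst sigma_finite_measure.sigma_finite_iff_density_finite[OF sigma_finite_lborel]) auto
  have "(\<integral>\<^sup>+y. of_bool (K \<le> exp (snd y) * \<bar>fst y\<bar>) \<partial>(?N \<Otimes>\<^sub>M ?Lap))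
      = (\<integral>\<^sup>+a. \<integral>\<^sup>+b. of_bool (K \<le> exp b * \<bar>a\<bar>) \<partial>?Lap \<partial>?N)"
    using Lap.nn_integral_fst[where f="\<lambda>y. of_bool (K \<le> exp (snd y) * \<bar>fst y\<bar>)"] by simp
  also have "\<dots> = (\<integral>\<^sup>+a. ennreal (std_normal_density a) *
      (\<integral>\<^sup>+b. ennreal (laplace_density \<Delta> b) * indicator {b. K \<le> exp b * \<bar>a\<bar>} b \<partial>lborel) \<partial>lborel)"
    unfolding indicator_def by (subst nn_integral_density, measurable)+
  also have "\<dots> = (\<integral>\<^sup>+a. ennreal (std_normal_density a * exp_laplace_tail \<Delta> K a) \<partial>lborel)"
    by (intro nn_integral_cong_AE)
       (use AE_lborel_singleton[of 0] in \<open>eventually_elim,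
         auto simp: nn_integral_laplace_density_exp_ge[OF assms(1) \<open>K > 0\<close>] ennreal_mult tail_nonneg\<close>)
  also have "\<dots> = ennreal (sqrt 2) * (\<integral>\<^sup>+u. ennreal (std_normal_density (sqrt 2 * u) *
      exp_laplace_tail \<Delta> K (sqrt 2 * u)) \<partial>lborel)"
    using nn_integral_real_affine[of "\<lambda>a. ennreal (std_normal_density a * exp_laplace_tail \<Delta> K a)" "sqrt 2" 0]
    by simp
  also have "\<dots> = (\<integral>\<^sup>+u. ennreal (exp (- u\<^sup>2) / sqrt pi * exp_laplace_tail \<Delta> L u) \<partial>lborel)"
  proof -
    have "sqrt 2 * (std_normal_density (sqrt 2 * u) * exp_laplace_tail \<Delta> K (sqrt 2 * u))
        = exp (- u\<^sup>2) / sqrt pi * exp_laplace_tail \<Delta> L u" for u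
      by (simp add: K_def exp_laplace_tail_scale normal_density_def power_mult_distrib real_sqrt_mult)
    then have "ennreal (sqrt 2) * ennreal (std_normal_density (sqrt 2 * u) * exp_laplace_tail \<Delta> K (sqrt 2 * u))
        = ennreal (exp (- u\<^sup>2) / sqrt pi * exp_laplace_tail \<Delta> L u)" for u
      by (subst ennreal_mult'[symmetric]) auto
    then show ?thesis
      by (subst nn_integral_cmult[symmetric]) auto
  qed
  finally show ?thesis unfolding K_def .
qed

lemma interval_integral_exp_laplace_tail_below:
  assumes "\<Delta> > 0" and "L > 0"
  shows "(LBINT u=0..L. exp (- u\<^sup>2) / sqrt pi * exp_laplace_tail \<Delta> L u)
       = L powr (- 1 / \<Delta>) / (4 * sqrt pi) * lower_inc_gamma ((1 + 1 / \<Delta>) / 2) (L\<^sup>2)"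
proof -
  have "(LBINT u=0..L. exp (- u\<^sup>2) / sqrt pi * exp_laplace_tail \<Delta> L u)
      = (LBINT u=0..L. L powr (- 1 / \<Delta>) / (2 * sqrt pi) * (u powr (1 / \<Delta>) * exp (- u\<^sup>2)))"
  proof (rule interval_integral_cong)
    fix u assume "u \<in> einterval (min 0 (ereal L)) (max 0 (ereal L))"
    then have u: "0 < u" "u < L" using assms by (auto simp: einterval_iff)
    then have "(u / L) powr (1 / \<Delta>) = u powr (1 / \<Delta>) * L powr (- 1 / \<Delta>)"
      using assms by (simp add: powr_divide powr_minus_divide)
    then show "exp (- u\<^sup>2) / sqrt pi * exp_laplace_tail \<Delta> L u
        = L powr (- 1 / \<Delta>) / (2 * sqrt pi) * (u powr (1 / \<Delta>) * exp (- u\<^sup>2))"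
      using u by (simp add: exp_laplace_tail_def mult_ac)
  qed
  also have "\<dots> = L powr (- 1 / \<Delta>) / (2 * sqrt pi) * (LBINT u=0..L. u powr (1 / \<Delta>) * exp (- u\<^sup>2))"
    by (rule interval_lebesgue_integral_mult_right)
  also have "(LBINT u=0..L. u powr (1 / \<Delta>) * exp (- u\<^sup>2)) = lower_inc_gamma ((1 + 1 / \<Delta>) / 2) (L\<^sup>2) / 2"
    using lower_inc_gamma_square_subst[of "1 / \<Delta>" L] assms by simp
  finally show ?thesis by simp
qed

lemma interval_integral_exp_laplace_tail_above:
  assumes "\<Delta> > 0" and "L > 0"
  shows "(LBINT u=L..\<infinity>. exp (- u\<^sup>2) / sqrt pi * exp_laplace_tail \<Delta> L u)
       = erfc L / 2 - L powr (1 / \<Delta>) / (4 * sqrt pi) * upper_inc_gamma ((1 - 1 / \<Delta>) / 2) (L\<^sup>2)"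
proof -
  have "(LBINT u=L..\<infinity>. exp (- u\<^sup>2) / sqrt pi * exp_laplace_tail \<Delta> L u)
      = (LBINT u=L..\<infinity>. exp (- u\<^sup>2) / sqrt pi
           - L powr (1 / \<Delta>) / (2 * sqrt pi) * (u powr (- (1 / \<Delta>)) * exp (- u\<^sup>2)))"
  proof (rule interval_integral_cong)
    fix u assume "u \<in> einterval (min (ereal L) \<infinity>) (max (ereal L) \<infinity>)"
    then have u: "L < u" by (auto simp: einterval_iff)
    then have "(L / u) powr (1 / \<Delta>) = L powr (1 / \<Delta>) * u powr (- (1 / \<Delta>))"
      using assms by (simp add: powr_divide powr_minus_divide)
    then show "exp (- u\<^sup>2) / sqrt pi * exp_laplace_tail \<Delta> L u
        = exp (- u\<^sup>2) / sqrt pi - L powr (1 / \<Delta>) / (2 * sqrt pi) * (u powr (- (1 / \<Delta>)) * exp (- u\<^sup>2))"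
      using u assms by (simp add: exp_laplace_tail_def right_diff_distrib mult_ac)
  qed
  also have "\<dots> = (LBINT u=L..\<infinity>. exp (- u\<^sup>2) / sqrt pi)
      - (LBINT u=L..\<infinity>. L powr (1 / \<Delta>) / (2 * sqrt pi) * (u powr (- (1 / \<Delta>)) * exp (- u\<^sup>2)))"
  proof (rule interval_lebesgue_integral_diff(2))
    show "interval_lebesgue_integrable lborel (ereal L) \<infinity> (\<lambda>u. exp (- u\<^sup>2) / sqrt pi)"
      by (intro interval_lebesgue_integrable_if_integrable integrable_divide integrable_exp_neg_square)
    show "interval_lebesgue_integrable lborel (ereal L) \<infinity>
        (\<lambda>u. L powr (1 / \<Delta>) / (2 * sqrt pi) * (u powr (- (1 / \<Delta>)) * exp (- u\<^sup>2)))"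
      using set_integrable_powr_exp_neg_square_Ioi[of "- (1 / \<Delta>)" L] assms
      by (simp add: interval_lebesgue_integrable_def)
  qed
  also have "(LBINT u=L..\<infinity>. exp (- u\<^sup>2) / sqrt pi) = erfc L / 2"
    by (simp add: erfc_def interval_integral_Ici)
  also have "(LBINT u=L..\<infinity>. L powr (1 / \<Delta>) / (2 * sqrt pi) * (u powr (- (1 / \<Delta>)) * exp (- u\<^sup>2)))
      = L powr (1 / \<Delta>) / (2 * sqrt pi) * (upper_inc_gamma ((1 - 1 / \<Delta>) / 2) (L\<^sup>2) / 2)"
    using upper_inc_gamma_square_subst[of "1 / \<Delta>" L] assms by simp
  finally show ?thesis by simp
qed

lemma integral_exp_laplace_tail:
  assumes "\<Delta> > 0" and "L > 0"
  shows "(\<integral>u. exp (- u\<^sup>2) / sqrt pi * exp_laplace_tail \<Delta> L u \<partial>lborel)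
       = 1 / (2 * sqrt pi) *
           (lower_inc_gamma ((1 + 1 / \<Delta>) / 2) (L\<^sup>2) * L powr (- 1 / \<Delta>)
            - upper_inc_gamma ((1 - 1 / \<Delta>) / 2) (L\<^sup>2) * L powr (1 / \<Delta>))
         + erfc L"
proof -
  define W where "W u = exp (- u\<^sup>2) / sqrt pi * exp_laplace_tail \<Delta> L u" for u
  have "integrable lborel W"
  proof (rule Bochner_Integration.integrable_bound)
    show "integrable lborel (\<lambda>u. exp (- u\<^sup>2) / sqrt pi)"
      by (intro integrable_divide integrable_exp_neg_square)
    show "AE u in lborel. norm (W u) \<le> norm (exp (- u\<^sup>2) / sqrt pi)"
      using exp_laplace_tail_bounds[OF assms]
      by (auto simp: W_def abs_mult intro!: mult_left_le divide_right_mono)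
  qed (simp add: W_def[abs_def])
  then have W_integrable: "interval_lebesgue_integrable lborel a b W" for a b
    by (rule interval_lebesgue_integrable_if_integrable)
  have "(\<integral>u. W u \<partial>lborel) = (LBINT u=-\<infinity>..\<infinity>. W u)"
    by (simp add: interval_lebesgue_integral_def set_lebesgue_integral_def)
  also have "\<dots> = (LBINT u=-\<infinity>..0. W u) + (LBINT u=0..\<infinity>. W u)"
    by (rule interval_integral_sum[symmetric]) (simp add: W_integrable)
  also have "(LBINT u=-\<infinity>..0. W u) = (LBINT u=0..\<infinity>. W u)"
  proof -
    have "(\<lambda>u. W (- u)) = W" by (simp add: W_def exp_laplace_tail_def fun_eq_iff)
    then show ?thesis by (subst interval_integral_reflect) simp
  qed
  also have "(LBINT u=0..\<infinity>. W u) = (LBINT u=0..L. W u) + (LBINT u=L..\<infinity>. W u)"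
    by (rule interval_integral_sum[symmetric]) (simp add: W_integrable)
  also have "(LBINT u=0..L. W u)
      = L powr (- 1 / \<Delta>) / (4 * sqrt pi) * lower_inc_gamma ((1 + 1 / \<Delta>) / 2) (L\<^sup>2)"
    unfolding W_def by (rule interval_integral_exp_laplace_tail_below[OF assms])
  also have "(LBINT u=L..\<infinity>. W u)
      = erfc L / 2 - L powr (1 / \<Delta>) / (4 * sqrt pi) * upper_inc_gamma ((1 - 1 / \<Delta>) / 2) (L\<^sup>2)"
    unfolding W_def by (rule interval_integral_exp_laplace_tail_above[OF assms])
  also have "l / (4 * sqrt pi) * g + (e / 2 - l' / (4 * sqrt pi) * g')
      + (l / (4 * sqrt pi) * g + (e / 2 - l' / (4 * sqrt pi) * g'))
      = 1 / (2 * sqrt pi) * (g * l - g' * l') + e" for l l' g g' e :: real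
    by (simp add: field_simps)
  finally show ?thesis unfolding W_def .
qed

lemma integral_normal_laplace_exp_ge:
  assumes "\<Delta> > 0" and "L > 0"
  shows "(\<integral>y. of_bool (sqrt 2 * L \<le> exp (snd y) * \<bar>fst y\<bar>)
            \<partial>(density lborel (\<lambda>x. ennreal (std_normal_density x))
               \<Otimes>\<^sub>M density lborel (\<lambda>x. ennreal (laplace_density \<Delta> x))))
       = 1 / (2 * sqrt pi) *
           (lower_inc_gamma ((1 + 1 / \<Delta>) / 2) (L\<^sup>2) * L powr (- 1 / \<Delta>)
            - upper_inc_gamma ((1 - 1 / \<Delta>) / 2) (L\<^sup>2) * L powr (1 / \<Delta>))
         + erfc L"
proof -
  let ?P = "density lborel (\<lambda>x. ennreal (std_normal_density x))
    \<Otimes>\<^sub>M density lborel (\<lambda>x. ennreal (laplace_density \<Delta> x))"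
  have "ennreal (of_bool P) = of_bool P" for P
    by (cases P) auto
  then have "(\<integral>y. of_bool (sqrt 2 * L \<le> exp (snd y) * \<bar>fst y\<bar>) \<partial>?P)
      = enn2real (\<integral>\<^sup>+y. of_bool (sqrt 2 * L \<le> exp (snd y) * \<bar>fst y\<bar>) \<partial>?P)"
    by (subst integral_eq_nn_integral) auto
  also have "\<dots> = enn2real (\<integral>\<^sup>+u. ennreal (exp (- u\<^sup>2) / sqrt pi * exp_laplace_tail \<Delta> L u) \<partial>lborel)"
    by (simp only: nn_integral_normal_laplace_exp_ge[OF assms])
  also have "\<dots> = (\<integral>u. exp (- u\<^sup>2) / sqrt pi * exp_laplace_tail \<Delta> L u \<partial>lborel)"
    using exp_laplace_tail_bounds(1)[OF assms] by (subst integral_eq_nn_integral) auto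
  also have "\<dots> = 1 / (2 * sqrt pi) *
           (lower_inc_gamma ((1 + 1 / \<Delta>) / 2) (L\<^sup>2) * L powr (- 1 / \<Delta>)
            - upper_inc_gamma ((1 - 1 / \<Delta>) / 2) (L\<^sup>2) * L powr (1 / \<Delta>))
         + erfc L"
    by (rule integral_exp_laplace_tail[OF assms])
  finally show ?thesis .
qed

lemma (in prob_space) indep_sets_three_grouping:
  fixes E :: "nat \<Rightarrow> 'a set set"
  assumes indep: "indep_sets E {0, 1, 2}" and stable: "\<And>i. i \<in> {0, 1, 2} \<Longrightarrow> Int_stable (E i)"
  shows "indep_set (sigma_sets (space M) (E 0)) (sigma_sets (space M) (E 1 \<union> E 2))"
    and "indep_set (sigma_sets (space M) (E 1)) (sigma_sets (space M) (E 2))"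
proof -
  define I where "I b = (if b then {0::nat} else {1, 2})" for b
  have "indep_sets (\<lambda>b. sigma_sets (space M) (\<Union>i\<in>I b. E i)) UNIV"
    by (rule indep_sets_collect_sigma)
       (use indep stable in \<open>auto simp: I_def disjoint_family_on_def UNIV_bool insert_commute split: if_splits\<close>)
  then show "indep_set (sigma_sets (space M) (E 0)) (sigma_sets (space M) (E 1 \<union> E 2))"
    unfolding indep_set_def by (rule indep_sets_cong[THEN iffD1, rotated -1]) (auto simp: I_def split: bool.split)
  define I' where "I' b = (if b then {1::nat} else {2})" for b
  have "indep_sets (\<lambda>b. sigma_sets (space M) (\<Union>i\<in>I' b. E i)) UNIV"
    by (rule indep_sets_collect_sigma)
       (use indep stable in \<open>auto simp: I'_def disjoint_family_on_def UNIV_bool split: if_splits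
         intro: indep_sets_mono_index\<close>)
  then show "indep_set (sigma_sets (space M) (E 1)) (sigma_sets (space M) (E 2))"
    unfolding indep_set_def by (rule indep_sets_cong[THEN iffD1, rotated -1]) (auto simp: I'_def split: bool.split)
qed

lemma Int_stable_vimage_sets: "Int_stable {f -` A \<inter> space M | A. A \<in> sets N}"
proof (rule Int_stableI)
  fix a b assume "a \<in> {f -` A \<inter> space M | A. A \<in> sets N}" "b \<in> {f -` A \<inter> space M | A. A \<in> sets N}"
  then obtain A B where "a = f -` A \<inter> space M" "b = f -` B \<inter> space M" "A \<in> sets N" "B \<in> sets N"
    by blast
  then show "a \<inter> b \<in> {f -` A \<inter> space M | A. A \<in> sets N}"
    by (intro CollectI exI[of _ "A \<inter> B"]) auto
qed

lemma vimage_Pair_sets_subset_sigma_sets: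
  assumes "f \<in> space M \<rightarrow> space N1" and "g \<in> space M \<rightarrow> space N2"
  shows "{(\<lambda>\<omega>. (f \<omega>, g \<omega>)) -` A \<inter> space M | A. A \<in> sets (N1 \<Otimes>\<^sub>M N2)}
    \<subseteq> sigma_sets (space M) ({f -` A \<inter> space M | A. A \<in> sets N1} \<union> {g -` A \<inter> space M | A. A \<in> sets N2})"
proof -
  let ?E = "{f -` A \<inter> space M | A. A \<in> sets N1} \<union> {g -` A \<inter> space M | A. A \<in> sets N2}"
  define S where "S = sigma (space M) ?E"
  have S: "sets S = sigma_sets (space M) ?E" "space S = space M"
    unfolding S_def by (auto intro!: sets_measure_of space_measure_of)
  have "f -` A \<inter> space M \<in> sets S" if "A \<in> sets N1" for A
    unfolding S(1) by (rule sigma_sets.Basic) (use that in blast)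
  moreover have "g -` A \<inter> space M \<in> sets S" if "A \<in> sets N2" for A
    unfolding S(1) by (rule sigma_sets.Basic) (use that in blast)
  ultimately have "f \<in> measurable S N1" and "g \<in> measurable S N2"
    using assms by (auto intro!: measurableI simp: S(2))
  then have "(\<lambda>\<omega>. (f \<omega>, g \<omega>)) \<in> measurable S (N1 \<Otimes>\<^sub>M N2)"
    by (rule measurable_Pair)
  then show ?thesis
    by (auto simp: measurable_def S)
qed

lemma (in prob_space) distr_Pair_eq_pair_measure:
  assumes X [measurable]: "X \<in> measurable M S" and Y [measurable]: "Y \<in> measurable M T"
    and indep: "indep_set {X -` A \<inter> space M | A. A \<in> sets S} {Y -` B \<inter> space M | B. B \<in> sets T}"
  shows "distr M (S \<Otimes>\<^sub>M T) (\<lambda>\<omega>. (X \<omega>, Y \<omega>)) = distr M S X \<Otimes>\<^sub>M distr M T Y"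
proof -
  interpret SX: prob_space "distr M S X" by (rule prob_space_distr) simp
  interpret TY: prob_space "distr M T Y" by (rule prob_space_distr) simp
  show ?thesis
  proof (rule pair_measure_eqI[symmetric])
    fix A B assume A: "A \<in> sets (distr M S X)" and B: "B \<in> sets (distr M T Y)"
    have "(\<lambda>\<omega>. (X \<omega>, Y \<omega>)) -` (A \<times> B) \<inter> space M = (X -` A \<inter> space M) \<inter> (Y -` B \<inter> space M)"
      by auto
    moreover have "prob ((X -` A \<inter> space M) \<inter> (Y -` B \<inter> space M))
        = prob (X -` A \<inter> space M) * prob (Y -` B \<inter> space M)"
      using A B by (intro indep_setD[OF indep]) auto
    ultimately show "emeasure (distr M S X) A * emeasure (distr M T Y) B
        = emeasure (distr M (S \<Otimes>\<^sub>M T) (\<lambda>\<omega>. (X \<omega>, Y \<omega>))) (A \<times> B)"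
      using A B by (simp add: emeasure_distr emeasure_eq_measure ennreal_mult)
  qed (simp_all add: SX.sigma_finite_measure_axioms TY.sigma_finite_measure_axioms)
qed

lemma (in prob_space) integral_indep_iterated:
  fixes k :: "'b \<times> 'c \<Rightarrow> real"
  assumes [measurable]: "X \<in> measurable M S" "Y \<in> measurable M T"
    and indep: "indep_set {X -` A \<inter> space M | A. A \<in> sets S} {Y -` B \<inter> space M | B. B \<in> sets T}"
    and k [measurable]: "k \<in> borel_measurable (S \<Otimes>\<^sub>M T)" and bounded: "\<And>p. \<bar>k p\<bar> \<le> B"
  shows "(\<integral>\<omega>. k (X \<omega>, Y \<omega>) \<partial>M) = (\<integral>\<omega>. (\<integral>y. k (X \<omega>, y) \<partial>distr M T Y) \<partial>M)"
proof -
  interpret SX: prob_space "distr M S X" by (rule prob_space_distr) simp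
  interpret TY: prob_space "distr M T Y" by (rule prob_space_distr) simp
  interpret ST: pair_prob_space "distr M S X" "distr M T Y" ..
  have [measurable]: "(\<lambda>x. \<integral>y. k (x, y) \<partial>distr M T Y) \<in> borel_measurable S"
    using TY.borel_measurable_lebesgue_integral[where f="\<lambda>x y. k (x, y)"] by simp
  have "(\<integral>\<omega>. k (X \<omega>, Y \<omega>) \<partial>M) = integral\<^sup>L (distr M (S \<Otimes>\<^sub>M T) (\<lambda>\<omega>. (X \<omega>, Y \<omega>))) k"
    by (rule integral_distr[symmetric]) simp_all
  also have "\<dots> = integral\<^sup>L (distr M S X \<Otimes>\<^sub>M distr M T Y) k"
    by (simp add: distr_Pair_eq_pair_measure[OF assms(1,2) indep])
  also have "\<dots> = (\<integral>x. (\<integral>y. k (x, y) \<partial>distr M T Y) \<partial>distr M S X)"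
  proof (rule ST.integral_fst'[symmetric])
    show "integrable (distr M S X \<Otimes>\<^sub>M distr M T Y) k"
      using bounded by (intro ST.P.integrable_const_bound[where B=B]) auto
  qed
  also have "\<dots> = (\<integral>\<omega>. (\<integral>y. k (X \<omega>, y) \<partial>distr M T Y) \<partial>M)"
    by (rule integral_distr) simp_all
  finally show ?thesis .
qed

lemma (in prob_space) set_integral_indep_freeze:
  fixes g :: "'b \<times> 'c \<Rightarrow> real"
  assumes sub: "subalgebra M F" and X: "X \<in> measurable F S" and Y: "Y \<in> measurable M T"
    and indep: "indep_set (sets F) (sigma_sets (space M) {Y -` B \<inter> space M | B. B \<in> sets T})"
    and g [measurable]: "g \<in> borel_measurable (S \<Otimes>\<^sub>M T)" and bounded: "\<And>p. \<bar>g p\<bar> \<le> B"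
    and A: "A \<in> sets F"
  shows "(\<integral>\<omega>\<in>A. g (X \<omega>, Y \<omega>) \<partial>M) = (\<integral>\<omega>\<in>A. (\<integral>y. g (X \<omega>, y) \<partial>distr M T Y) \<partial>M)"
proof -
  have space_F: "space F = space M"
    using sub by (simp add: subalgebra_def)
  \<comment> \<open>Pair \<open>X\<close> with the indicator of \<open>A\<close>: the pair is still \<open>F\<close>-measurable, hence independent of \<open>Y\<close>.\<close>
  define W where "W \<omega> = (\<omega> \<in> A, X \<omega>)" for \<omega>
  have W_F: "W \<in> measurable F (count_space UNIV \<Otimes>\<^sub>M S)"
    unfolding W_def using A X by (intro measurable_Pair) (simp_all add: pred_sets2[OF _ measurable_ident])
  then have W_M: "W \<in> measurable M (count_space UNIV \<Otimes>\<^sub>M S)"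
    using measurable_from_subalg[OF sub] by blast
  have indep_W: "indep_set {W -` C \<inter> space M | C. C \<in> sets (count_space UNIV \<Otimes>\<^sub>M S)}
      {Y -` C \<inter> space M | C. C \<in> sets T}"
    unfolding indep_set_def
    by (rule indep_sets_mono_sets[OF indep[unfolded indep_set_def]])
       (use W_F space_F in \<open>auto simp: measurable_def split: bool.split\<close>)
  define k where "k p = of_bool (fst (fst p)) * g (snd (fst p), snd p)" for p :: "(bool \<times> 'b) \<times> 'c"
  have k_measurable: "k \<in> borel_measurable ((count_space UNIV \<Otimes>\<^sub>M S) \<Otimes>\<^sub>M T)"
    unfolding k_def by measurable
  have k_bounded: "\<bar>k p\<bar> \<le> B" for p
    using bounded order_trans[OF abs_ge_zero bounded] by (simp add: k_def abs_mult mult_le_one)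
  from integral_indep_iterated[OF W_M Y indep_W k_measurable k_bounded]
  show ?thesis
    unfolding set_lebesgue_integral_def W_def k_def by (simp add: indicator_def)
qed

lemma (in prob_space) real_cond_exp_indep_freeze:
  fixes g :: "'b \<times> 'c \<Rightarrow> real"
  assumes "sigma_finite_subalgebra M F"
    and X: "X \<in> measurable F S" and Y [measurable]: "Y \<in> measurable M T"
    and indep: "indep_set (sets F) (sigma_sets (space M) {Y -` B \<inter> space M | B. B \<in> sets T})"
    and g [measurable]: "g \<in> borel_measurable (S \<Otimes>\<^sub>M T)" and bounded: "\<And>p. \<bar>g p\<bar> \<le> B"
  shows "AE \<omega> in M. real_cond_exp M F (\<lambda>\<omega>. g (X \<omega>, Y \<omega>)) \<omega> = (\<integral>y. g (X \<omega>, y) \<partial>distr M T Y)"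
proof -
  interpret F: sigma_finite_subalgebra M F by fact
  have X_M [measurable]: "X \<in> measurable M S"
    using X measurable_from_subalg[OF F.subalg] by blast
  interpret TY: prob_space "distr M T Y" by (rule prob_space_distr) simp
  define G where "G x = (\<integral>y. g (x, y) \<partial>distr M T Y)" for x
  have [measurable]: "G \<in> borel_measurable S"
    unfolding G_def using TY.borel_measurable_lebesgue_integral[where f="\<lambda>x y. g (x, y)"] by simp
  have G_bounded: "\<bar>G x\<bar> \<le> B" if "x \<in> space S" for x
  proof -
    have "(\<lambda>y. \<bar>g (x, y)\<bar>) \<in> borel_measurable T"
      using that by measurable
    then have "integrable (distr M T Y) (\<lambda>y. \<bar>g (x, y)\<bar>)"
      by (intro TY.integrable_const_bound[where B=B]) (simp_all add: bounded)
    then show ?thesis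
      unfolding G_def by (intro order_trans[OF integral_abs_bound] TY.integral_le_const) (simp_all add: bounded)
  qed
  have "AE \<omega> in M. real_cond_exp M F (\<lambda>\<omega>. g (X \<omega>, Y \<omega>)) \<omega> = G (X \<omega>)"
  proof (rule F.real_cond_exp_charact)
    show "integrable M (\<lambda>\<omega>. g (X \<omega>, Y \<omega>))"
      by (rule integrable_const_bound[where B=B]) (simp add: bounded, measurable)
    show "integrable M (\<lambda>\<omega>. G (X \<omega>))"
      by (rule integrable_const_bound[where B=B])
         (auto simp: G_bounded measurable_space[OF X_M], measurable)
    show "(\<lambda>\<omega>. G (X \<omega>)) \<in> borel_measurable F"
      by (rule measurable_compose[OF X]) simp
    show "(\<integral>\<omega>\<in>A. g (X \<omega>, Y \<omega>) \<partial>M) = (\<integral>\<omega>\<in>A. G (X \<omega>) \<partial>M)" if "A \<in> sets F" for A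
      unfolding G_def by (rule set_integral_indep_freeze[OF F.subalg X Y indep g bounded that])
  qed
  then show ?thesis
    unfolding G_def .
qed

lemma (in prob_space) indep_sets_subalgebra_two_vars:
  assumes sub: "subalgebra M F" and X: "X \<in> measurable M N1" and Y: "Y \<in> measurable M N2"
    and indep: "indep_sets (\<lambda>i::nat. if i = 0 then sets F
                  else if i = 1 then {X -` A \<inter> space M | A. A \<in> sets N1}
                  else {Y -` A \<inter> space M | A. A \<in> sets N2}) {0, 1, 2}"
  shows "indep_set (sets F)
           (sigma_sets (space M) {(\<lambda>\<omega>. (X \<omega>, Y \<omega>)) -` A \<inter> space M | A. A \<in> sets (N1 \<Otimes>\<^sub>M N2)})"
    and "indep_set {X -` A \<inter> space M | A. A \<in> sets N1} {Y -` A \<inter> space M | A. A \<in> sets N2}"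
proof -
  let ?E = "\<lambda>i::nat. if i = 0 then sets F
                  else if i = 1 then {X -` A \<inter> space M | A. A \<in> sets N1}
                  else {Y -` A \<inter> space M | A. A \<in> sets N2}"
  have stable: "Int_stable (?E i)" for i
    by (simp add: sets.Int_stable Int_stable_vimage_sets)
  have "sigma_sets (space M) (sets F) = sets F"
    using sub sets.sigma_sets_eq[of F] by (simp add: subalgebra_def)
  moreover have "sigma_sets (space M) {(\<lambda>\<omega>. (X \<omega>, Y \<omega>)) -` A \<inter> space M | A. A \<in> sets (N1 \<Otimes>\<^sub>M N2)}
      \<subseteq> sigma_sets (space M) (?E 1 \<union> ?E 2)"
    using vimage_Pair_sets_subset_sigma_sets[of X M N1 Y N2] X Y
    by (intro sigma_sets_mono) (auto dest: measurable_space)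
  ultimately show "indep_set (sets F)
      (sigma_sets (space M) {(\<lambda>\<omega>. (X \<omega>, Y \<omega>)) -` A \<inter> space M | A. A \<in> sets (N1 \<Otimes>\<^sub>M N2)})"
    using indep_sets_three_grouping(1)[OF indep stable] unfolding indep_set_def
    by (elim indep_sets_mono_sets) (auto split: bool.split)
  show "indep_set {X -` A \<inter> space M | A. A \<in> sets N1} {Y -` A \<inter> space M | A. A \<in> sets N2}"
    using indep_sets_three_grouping(2)[OF indep stable] unfolding indep_set_def
    by (elim indep_sets_mono_sets) (auto split: bool.split)
qed

theorem theorem2p2:
  fixes M F :: "'a measure"
    and \<epsilon> H Hbar h z :: "'a \<Rightarrow> real"
    and \<Delta> \<Lambda> :: real
  assumes "prob_space M"
    and "sigma_finite_subalgebra M F"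
    and Hbar_meas: "Hbar \<in> borel_measurable F"
    and H_def: "\<And>\<omega>. \<omega> \<in> space M \<Longrightarrow> H \<omega> = Hbar \<omega> + h \<omega>"
    and eps_def: "\<And>\<omega>. \<omega> \<in> space M \<Longrightarrow> \<epsilon> \<omega> = exp (H \<omega>) * z \<omega>"
    and Delta_pos: "\<Delta> > 0"
    and h_laplace: "distributed M lborel h (\<lambda>x. ennreal (laplace_density \<Delta> x))"
    and z_normal: "distributed M lborel z (\<lambda>x. ennreal (std_normal_density x))"
    and indep: "prob_space.indep_sets M
        (\<lambda>i::nat. if i = 0 then sets F
                  else if i = 1 then {z -` A \<inter> space M | A. A \<in> sets borel}
                  else {h -` A \<inter> space M | A. A \<in> sets borel}) {0, 1, 2}"
    and Lambda_pos: "\<Lambda> > 0"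
  shows "AE \<omega> in M.
     real_cond_exp M F (indicator {\<omega>' \<in> space M. \<bar>\<epsilon> \<omega>'\<bar> \<ge> \<Lambda>}) \<omega> =
       (let L = \<Lambda> / (sqrt 2 * exp (Hbar \<omega>)) in
         1 / (2 * sqrt pi) *
           (lower_inc_gamma ((1 + 1 / \<Delta>) / 2) (L\<^sup>2) * L powr (- 1 / \<Delta>)
            - upper_inc_gamma ((1 - 1 / \<Delta>) / 2) (L\<^sup>2) * L powr (1 / \<Delta>))
         + erfc L)"
proof -
  interpret prob_space M by fact
  interpret F: sigma_finite_subalgebra M F by fact
  have [measurable]: "z \<in> borel_measurable M" "h \<in> borel_measurable M"
    using z_normal h_laplace by (simp_all add: distributed_def)
  have [measurable]: "Hbar \<in> borel_measurable M"
    using Hbar_meas measurable_from_subalg[OF F.subalg] by blast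
  note indep_zh = indep_sets_subalgebra_two_vars[OF F.subalg _ _ indep]
  have distr_zh: "distr M (borel \<Otimes>\<^sub>M borel) (\<lambda>\<omega>. (z \<omega>, h \<omega>))
      = density lborel (\<lambda>x. ennreal (std_normal_density x))
        \<Otimes>\<^sub>M density lborel (\<lambda>x. ennreal (laplace_density \<Delta> x))"
    using distr_Pair_eq_pair_measure[OF _ _ indep_zh(2)] z_normal h_laplace
    by (simp add: distributed_def distr_cong[OF refl sets_lborel[symmetric]])
  define g :: "real \<times> real \<times> real \<Rightarrow> real"
    where "g = (\<lambda>(c, a, b). of_bool (\<Lambda> / exp c \<le> exp b * \<bar>a\<bar>))"
  have g_measurable: "g \<in> borel_measurable (borel \<Otimes>\<^sub>M (borel \<Otimes>\<^sub>M borel))"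
    unfolding g_def by measurable
  have event: "{\<omega> \<in> space M. \<bar>\<epsilon> \<omega>\<bar> \<ge> \<Lambda>} = {\<omega> \<in> space M. g (Hbar \<omega>, z \<omega>, h \<omega>) = 1}"
    by (auto simp: g_def eps_def H_def abs_mult exp_add field_simps)
  have "AE \<omega> in M. real_cond_exp M F (indicator {\<omega> \<in> space M. \<bar>\<epsilon> \<omega>\<bar> \<ge> \<Lambda>}) \<omega>
      = real_cond_exp M F (\<lambda>\<omega>. g (Hbar \<omega>, z \<omega>, h \<omega>)) \<omega>"
    unfolding event using g_measurable
    by (intro F.real_cond_exp_cong) (auto simp: g_def indicator_def, measurable)
  moreover have "AE \<omega> in M. real_cond_exp M F (\<lambda>\<omega>. g (Hbar \<omega>, z \<omega>, h \<omega>)) \<omega>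
      = (\<integral>y. g (Hbar \<omega>, y) \<partial>distr M (borel \<Otimes>\<^sub>M borel) (\<lambda>\<omega>. (z \<omega>, h \<omega>)))"
    by (rule real_cond_exp_indep_freeze[where B=1, OF \<open>sigma_finite_subalgebra M F\<close> Hbar_meas _
          indep_zh(1) g_measurable]) (simp_all add: g_def split: prod.split)
  ultimately show ?thesis
  proof eventually_elim
    case (elim \<omega>)
    let ?L = "\<Lambda> / (sqrt 2 * exp (Hbar \<omega>))"
    from elim show ?case
      using integral_normal_laplace_exp_ge[OF Delta_pos, of ?L] Lambda_pos
      by (simp add: distr_zh g_def Let_def case_prod_beta)
  qed
qed

end
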